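(* Let $f:[0,1]\to\mathbb{R}$ be a piecewise $C^1$, concave, non-negative function which is not identically zero, and let $$\Omega=\{(y_1,y_2)\in\mathbb{R}^2: 0\le y_1\le 1,\ |y_2|\le f(y_1)\}.$$ Let $a=\min\{\tau\in[0,1]: f(\tau)=\max_{[0,1]}f\}$ and $b=\max\{\tau\in[0,1]: f(\tau)=\max_{[0,1]}f\}$. Then $$uf(\Omega)\subset\{(y_1,0)\in\Omega: a/2\le y_1\le (1+b)/2\}.$$
   Context: Minimal unfolded region: for $v\in S^1$ and $c\in\mathbb{R}$ let $I_{v,c}$ be the reflection in the line $\{z: z\cdot v=c\}$, $\Omega^+_{v,a}=\Omega\cap\{z\cdot v\ge a\}$, $\Omega^-_{v,a}=\Omega\cap\{z\cdot v\le a\}$, $u(v)=\inf\{b: I_{v,c}(\Omega^+_{v,c})\subset\Omega\ \forall c\ge b\}$, $l(v)=\sup\{b: I_{v,c}(\Omega^-_{v,c})\subset\Omega\ \forall c\le b\}$, and $uf(\Omega)=\bigcap_{v\in S^1}\{z\in\mathbb{R}^2: l(v)\le z\cdot v\le u(v)\}$. *)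

theory Defs
  imports "HOL-Analysis.Analysis"
begin

definition refl_line :: "real \<times> real \<Rightarrow> real \<Rightarrow> real \<times> real \<Rightarrow> real \<times> real" where
  "refl_line v c z = z - (2 * (z \<bullet> v - c)) *\<^sub>R v"

definition upper_part :: "(real \<times> real) set \<Rightarrow> real \<times> real \<Rightarrow> real \<Rightarrow> (real \<times> real) set" where
  "upper_part \<Omega> v a = \<Omega> \<inter> {z. z \<bullet> v \<ge> a}"

definition lower_part :: "(real \<times> real) set \<Rightarrow> real \<times> real \<Rightarrow> real \<Rightarrow> (real \<times> real) set" where
  "lower_part \<Omega> v a = \<Omega> \<inter> {z. z \<bullet> v \<le> a}"

definition u_val :: "(real \<times> real) set \<Rightarrow> real \<times> real \<Rightarrow> real" where
  "u_val \<Omega> v = Inf {b. \<forall>c\<ge>b. refl_line v c ` upper_part \<Omega> v c \<subseteq> \<Omega>}"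

definition l_val :: "(real \<times> real) set \<Rightarrow> real \<times> real \<Rightarrow> real" where
  "l_val \<Omega> v = Sup {b. \<forall>c\<le>b. refl_line v c ` lower_part \<Omega> v c \<subseteq> \<Omega>}"

definition unfolded :: "(real \<times> real) set \<Rightarrow> (real \<times> real) set" where
  "unfolded \<Omega> = (\<Inter>v\<in>{v. norm v = 1}. {z. l_val \<Omega> v \<le> z \<bullet> v \<and> z \<bullet> v \<le> u_val \<Omega> v})"

end

theory Submission
  imports Defs
begin

(* Any point z of the minimal unfolded region satisfies z \<bullet> v \<le> u(v) for every
   unit vector v, and u(v) \<le> c0 as soon as every reflection in a line z \<bullet> v = c with c \<ge> c0
   maps the cap of \<Omega> beyond that line back into \<Omega> (for bounded nonempty \<Omega>).  So it suffices
   to exhibit such thresholds c0 for the four directions (0,\<pm>1), (\<pm>1,0):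
   - the region is symmetric in y2, so c0 = 0 works for (0,1) and (0,-1), forcing y2 = 0;
   - a concave function decreases away from any maximiser, so reflecting in a vertical line
     y1 = c moves the cap towards the set of maximisers, where f is larger; this works for
     lines y1 = c with c \<ge> (1+b)/2 (direction (1,0)) and with c \<le> a/2 (direction (-1,0)). *)

lemma inner_refl_line:
  assumes "norm v = 1"
  shows "refl_line v c z \<bullet> v = 2 * c - z \<bullet> v"
proof -
  have "v \<bullet> v = 1" using assms by (simp add: norm_eq_sqrt_inner)
  then show ?thesis by (simp add: refl_line_def inner_diff_left algebra_simps)
qed

text \<open>For a bounded nonempty region the set of admissible thresholds defining u(v) is bounded
  below: reflecting a point of \<Omega> in a line far behind \<Omega> would leave every ball containing \<Omega>.\<close>

lemma u_val_le:
  assumes "bounded \<Omega>" "p \<in> \<Omega>" "norm v = 1"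
    and refl: "\<forall>c\<ge>c0. refl_line v c ` upper_part \<Omega> v c \<subseteq> \<Omega>"
  shows "u_val \<Omega> v \<le> c0"
proof -
  obtain R where R: "\<forall>z\<in>\<Omega>. norm z \<le> R" using assms(1) by (auto simp: bounded_iff)
  have coord_bound: "\<bar>z \<bullet> v\<bar> \<le> R" if "z \<in> \<Omega>" for z
    using Cauchy_Schwarz_ineq2[of z v] R that assms(3) by fastforce
  have "- R \<le> b" if b: "\<forall>c\<ge>b. refl_line v c ` upper_part \<Omega> v c \<subseteq> \<Omega>" for b
  proof (cases "p \<bullet> v \<le> b")
    case True
    then show ?thesis using coord_bound[OF assms(2)] by linarith
  next
    case False
    then have "p \<in> upper_part \<Omega> v b" using assms(2) by (simp add: upper_part_def)
    then have "refl_line v b p \<in> \<Omega>" using b by blast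
    then have "\<bar>2 * b - p \<bullet> v\<bar> \<le> R" using coord_bound inner_refl_line[OF assms(3)] by metis
    then show ?thesis using coord_bound[OF assms(2)] by linarith
  qed
  then have "bdd_below {b. \<forall>c\<ge>b. refl_line v c ` upper_part \<Omega> v c \<subseteq> \<Omega>}"
    by (auto intro: bdd_belowI[where m = "- R"])
  then show ?thesis unfolding u_val_def using refl by (intro cInf_lower) auto
qed

lemma unfolded_inner_le:
  assumes "z \<in> unfolded \<Omega>" "bounded \<Omega>" "\<Omega> \<noteq> {}" "norm v = 1"
    and "\<And>c. c0 \<le> c \<Longrightarrow> refl_line v c ` upper_part \<Omega> v c \<subseteq> \<Omega>"
  shows "z \<bullet> v \<le> c0"
proof -
  have "z \<bullet> v \<le> u_val \<Omega> v" using assms(1,4) unfolding unfolded_def by blast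
  also have "\<dots> \<le> c0" using assms(2-5) u_val_le by (metis ex_in_conv)
  finally show ?thesis .
qed

lemma concave_on_segment_from_max:
  fixes f :: "'a::real_vector \<Rightarrow> real"
  assumes "concave_on S f" "m \<in> S" "\<forall>t\<in>S. f t \<le> f m" "y \<in> S"
    and "x \<in> closed_segment m y"
  shows "f y \<le> f x"
proof -
  obtain u where u: "0 \<le> u" "u \<le> 1" and x: "x = (1 - u) *\<^sub>R m + u *\<^sub>R y"
    using assms(5) by (auto simp: in_segment)
  have "f y = (1 - u) * f y + u * f y" by (simp add: algebra_simps)
  also have "\<dots> \<le> (1 - u) * f m + u * f y"
    using u assms(3,4) by (intro add_right_mono mult_left_mono) auto
  also have "\<dots> \<le> f x" unfolding x using concave_onD[OF assms(1) u assms(2,4)] .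
  finally show ?thesis .
qed

lemma extreme_maximisers:
  fixes f :: "real \<Rightarrow> real"
  assumes "continuous_on K f" "compact K" "K \<noteq> {}"
  defines "S \<equiv> {\<tau>\<in>K. f \<tau> = (SUP t\<in>K. f t)}"
  shows "Inf S \<in> S" "Sup S \<in> S" "\<forall>m\<in>S. \<forall>t\<in>K. f t \<le> f m"
proof -
  obtain x0 where x0: "x0 \<in> K" "\<forall>t\<in>K. f t \<le> f x0"
    using continuous_attains_sup[OF assms(2,3,1)] by blast
  then have sup_eq: "(SUP t\<in>K. f t) = f x0" by (intro cSup_eq_maximum) auto
  then show "\<forall>m\<in>S. \<forall>t\<in>K. f t \<le> f m" using x0 by (simp add: S_def)
  have "S \<noteq> {}" using x0 sup_eq by (auto simp: S_def)
  moreover have "closed S" unfolding S_def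
    using assms(1,2) by (intro continuous_closed_preimage_constant compact_imp_closed)
  moreover have "bounded S"
    using compact_imp_bounded[OF assms(2)] by (rule bounded_subset) (auto simp: S_def)
  ultimately show "Inf S \<in> S" "Sup S \<in> S"
    by (auto intro: closed_contains_Inf closed_contains_Sup bounded_imp_bdd_below
      bounded_imp_bdd_above)
qed

definition graph_region :: "(real \<Rightarrow> real) \<Rightarrow> (real \<times> real) set" where
  "graph_region f = {(y1, y2). 0 \<le> y1 \<and> y1 \<le> 1 \<and> \<bar>y2\<bar> \<le> f y1}"

lemma graph_region_bounded:
  assumes "\<forall>t\<in>{0..1}. f t \<le> M"
  shows "bounded (graph_region f)"
proof -
  have "graph_region f \<subseteq> cbox (0, - M) (1, M)"
  proof
    fix z assume "z \<in> graph_region f"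
    then obtain y1 y2 where z: "z = (y1, y2)" "(y1, y2) \<in> graph_region f" by (cases z) auto
    then have "0 \<le> y1" "y1 \<le> 1" "\<bar>y2\<bar> \<le> M"
      using assms by (auto simp: graph_region_def intro: order_trans)
    then show "z \<in> cbox (0, - M) (1, M)" using z(1) by (auto simp: cbox_Pair_eq)
  qed
  then show ?thesis by (rule bounded_subset[OF bounded_cbox])
qed

lemma graph_region_refl_horizontal:
  assumes "s = 1 \<or> s = -1" "0 \<le> c"
  shows "refl_line (0, s) c ` upper_part (graph_region f) (0, s) c \<subseteq> graph_region f"
  using assms by (auto simp: refl_line_def upper_part_def graph_region_def)

text \<open>Reflecting in a vertical line lying beyond the midpoint between a maximiser m and the
  far end of [0,1] moves each point towards m, where f is larger.\<close>

lemma graph_region_refl_right: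
  assumes "concave_on {0..1} f" "m \<in> {0..1}" "\<forall>t\<in>{0..1}. f t \<le> f m" "(1 + m) / 2 \<le> c"
  shows "refl_line (1, 0) c ` upper_part (graph_region f) (1, 0) c \<subseteq> graph_region f"
proof
  fix w assume "w \<in> refl_line (1, 0) c ` upper_part (graph_region f) (1, 0) c"
  then obtain y1 y2 where w: "w = refl_line (1, 0) c (y1, y2)"
    and y: "0 \<le> y1" "y1 \<le> 1" "\<bar>y2\<bar> \<le> f y1" "c \<le> y1"
    by (auto simp: upper_part_def graph_region_def)
  have "2 * c - y1 \<in> closed_segment m y1"
    using y assms(2,4) by (auto simp: closed_segment_eq_real_ivl)
  then have "f y1 \<le> f (2 * c - y1)"
    using concave_on_segment_from_max[OF assms(1-3)] y by auto
  then show "w \<in> graph_region f"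
    using w y assms(2,4) by (auto simp: refl_line_def graph_region_def)
qed

lemma graph_region_refl_left:
  assumes "concave_on {0..1} f" "m \<in> {0..1}" "\<forall>t\<in>{0..1}. f t \<le> f m" "- m / 2 \<le> c"
  shows "refl_line (-1, 0) c ` upper_part (graph_region f) (-1, 0) c \<subseteq> graph_region f"
proof
  fix w assume "w \<in> refl_line (-1, 0) c ` upper_part (graph_region f) (-1, 0) c"
  then obtain y1 y2 where w: "w = refl_line (-1, 0) c (y1, y2)"
    and y: "0 \<le> y1" "y1 \<le> 1" "\<bar>y2\<bar> \<le> f y1" "y1 \<le> - c"
    by (auto simp: upper_part_def graph_region_def)
  have "- y1 - 2 * c \<in> closed_segment m y1"
    using y assms(2,4) by (auto simp: closed_segment_eq_real_ivl)
  then have "f y1 \<le> f (- y1 - 2 * c)"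
    using concave_on_segment_from_max[OF assms(1-3)] y by auto
  then show "w \<in> graph_region f"
    using w y assms(2,4) by (auto simp: refl_line_def graph_region_def)
qed

theorem lemma4p6:
  fixes f :: "real \<Rightarrow> real" and \<Omega> :: "(real \<times> real) set" and a b :: real
  assumes "f piecewise_C1_differentiable_on {0..1}"
    and "concave_on {0..1} f"
    and "\<forall>x\<in>{0..1}. f x \<ge> 0"
    and "\<exists>x\<in>{0..1}. f x \<noteq> 0"
    and "\<Omega> = {(y1, y2). 0 \<le> y1 \<and> y1 \<le> 1 \<and> \<bar>y2\<bar> \<le> f y1}"
    and "a = Inf {\<tau>\<in>{0..1}. f \<tau> = (SUP t\<in>{0..1}. f t)}"
    and "b = Sup {\<tau>\<in>{0..1}. f \<tau> = (SUP t\<in>{0..1}. f t)}"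
  shows "unfolded \<Omega> \<subseteq> {(y1, y2). (y1, y2) \<in> \<Omega> \<and> y2 = 0 \<and> a / 2 \<le> y1 \<and> y1 \<le> (1 + b) / 2}"
proof clarify
  fix z1 z2 assume z: "(z1, z2) \<in> unfolded \<Omega>"
  have "continuous_on {0..1} f"
    using assms(1) by (simp add: piecewise_C1_differentiable_on_def)
  from extreme_maximisers[OF this] assms(6,7)
  have a: "a \<in> {0..1}" "\<forall>t\<in>{0..1}. f t \<le> f a" and b: "b \<in> {0..1}" "\<forall>t\<in>{0..1}. f t \<le> f b"
    by auto
  have \<Omega>: "\<Omega> = graph_region f" using assms(5) by (simp add: graph_region_def)
  have "(0, 0) \<in> \<Omega>" using assms(3) by (simp add: \<Omega> graph_region_def)
  then have \<Omega>_bounded_nonempty: "bounded \<Omega>" "\<Omega> \<noteq> {}" using graph_region_bounded[OF b(2)] \<Omega> by auto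
  note bound = unfolded_inner_le[OF z \<Omega>_bounded_nonempty]
  have "(z1, z2) \<bullet> (0, 1) \<le> 0" "(z1, z2) \<bullet> (0, -1) \<le> 0"
    by (rule bound; simp add: \<Omega> graph_region_refl_horizontal)+
  moreover have "(z1, z2) \<bullet> (1, 0) \<le> (1 + b) / 2"
    by (rule bound) (simp_all add: \<Omega> graph_region_refl_right[OF assms(2) b])
  moreover have "(z1, z2) \<bullet> (-1, 0) \<le> - a / 2"
    by (rule bound) (simp_all add: \<Omega> graph_region_refl_left[OF assms(2) a])
  ultimately show "(z1, z2) \<in> \<Omega> \<and> z2 = 0 \<and> a / 2 \<le> z1 \<and> z1 \<le> (1 + b) / 2"
    using a b assms(3) by (auto simp: \<Omega> graph_region_def)
qed

end
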